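(* Let $\Theta\subseteq\mathbb{R}^d$ be closed and convex, let $\mathcal{D}(\cdot)$ be a distribution map and $\ell$ a loss. Suppose that $\ell$ is $\gamma$-strongly convex in $\theta$, $\beta$-smooth in $z$, that $\mathcal{D}(\cdot)$ is $\epsilon$-sensitive, and that the pair $(\mathcal{D}(\cdot),\ell)$ satisfies mixture dominance. Then the performative risk $\mathrm{PR}$ is $\lambda$-convex for $\lambda=\gamma-2\epsilon\beta$, i.e. $\theta\mapsto \mathrm{PR}(\theta)-\frac{\gamma-2\epsilon\beta}{2}\|\theta\|_2^2$ is convex on $\Theta$.
   Context: A distribution map $\mathcal{D}(\cdot)$ assigns to each $\theta\in\Theta$ a probability distribution $\mathcal{D}(\theta)$ over $\mathbb{R}^m$; $\ell(z;\theta)$ is a loss differentiable in $\theta$. The performative risk is $\mathrm{PR}(\theta)=\mathbb{E}_{z\sim\mathcal{D}(\theta)}\ell(z;\theta)$. For $\lambda\in\mathbb{R}$, $\mathrm{PR}$ is $\lambda$-convex if $\mathrm{PR}(\theta)-\frac{\lambda}{2}\|\theta\|_2^2$ is convex. Let $\mathcal{Z}=\bigcup_{\theta\in\Theta}\mathrm{supp}(\mathcal{D}(\theta))$. Assumptions: ($\epsilon$-sensitivity) $W_1(\mathcal{D}(\theta),\mathcal{D}(\theta'))\leq\epsilon\|\theta-\theta'\|_2$ for all $\theta,\theta'\in\Theta$, where $W_1$ is the Wasserstein-1 distance; ($\beta$-smooth in $z$) $\|\nabla_\theta\ell(z;\theta)-\nabla_\theta\ell(z';\theta)\|_2\leq\beta\|z-z'\|_2$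 for all $\theta\in\Theta$, $z,z'\in\mathcal{Z}$; ($\gamma$-strongly convex in $\theta$) for all $\theta,\theta',\theta_0\in\Theta$, $\mathbb{E}_{z\sim\mathcal{D}(\theta_0)}\ell(z;\theta)\geq \mathbb{E}_{z\sim\mathcal{D}(\theta_0)}\ell(z;\theta')+\mathbb{E}_{z\sim\mathcal{D}(\theta_0)}\nabla_\theta\ell(z;\theta')^\top(\theta-\theta')+\frac{\gamma}{2}\|\theta-\theta'\|_2^2$; (mixture dominance) for all $\theta,\theta',\theta_0\in\Theta$ and $\alpha\in(0,1)$, $\mathbb{E}_{z\sim\mathcal{D}(\alpha\theta+(1-\alpha)\theta')}\ell(z;\theta_0)\leq \mathbb{E}_{z\sim\alpha\mathcal{D}(\theta)+(1-\alpha)\mathcal{D}(\theta')}\ell(z;\theta_0)$, where $\alpha\mathcal{D}(\theta)+(1-\alpha)\mathcal{D}(\theta')$ denotes the mixture distribution. *)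

theory Defs
  imports "HOL-Probability.Probability"
begin

definition couplings :: "'b::euclidean_space measure \<Rightarrow> 'b measure \<Rightarrow> ('b \<times> 'b) measure set" where
  "couplings M N = {\<pi>. prob_space \<pi> \<and> sets \<pi> = sets (borel \<Otimes>\<^sub>M borel) \<and>
      distr \<pi> borel fst = M \<and> distr \<pi> borel snd = N}"

definition wasserstein1 :: "'b::euclidean_space measure \<Rightarrow> 'b measure \<Rightarrow> ennreal" where
  "wasserstein1 M N = (INF \<pi>\<in>couplings M N. \<integral>\<^sup>+ p. ennreal (dist (fst p) (snd p)) \<partial>\<pi>)"

definition measure_support :: "'b::euclidean_space measure \<Rightarrow> 'b set" where
  "measure_support M = {z. \<forall>U. open U \<and> z \<in> U \<longrightarrow> emeasure M U > 0}"

definition mixture :: "real \<Rightarrow> 'b measure \<Rightarrow> 'b measure \<Rightarrow> 'b measure" where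
  "mixture \<alpha> M N = measure_of (space M) (sets M)
      (\<lambda>A. ennreal \<alpha> * emeasure M A + ennreal (1 - \<alpha>) * emeasure N A)"

definition perf_risk :: "('a \<Rightarrow> 'b measure) \<Rightarrow> ('b \<Rightarrow> 'a \<Rightarrow> real) \<Rightarrow> 'a \<Rightarrow> real" where
  "perf_risk D l \<theta> = (\<integral>z. l z \<theta> \<partial>(D \<theta>))"

definition lambda_convex_on :: "real \<Rightarrow> 'a::real_normed_vector set \<Rightarrow> ('a \<Rightarrow> real) \<Rightarrow> bool" where
  "lambda_convex_on lam S f \<longleftrightarrow> convex_on S (\<lambda>\<theta>. f \<theta> - lam / 2 * norm \<theta> ^ 2)"

end

(* Write t = a x + (1 - a) y.  Mixture dominance bounds PR(t) by the mixture
   a E_{D(x)} l(z;t) + (1 - a) E_{D(y)} l(z;t).  Strong convexity at t, under D(x) and under D(y),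
   bounds these two expectations by PR(x) and PR(y) minus a gradient term and a quadratic term.
   The quadratic terms add up to a(1 - a) gamma/2 |x - y|^2, and the gradient terms leave
   a(1 - a) (E_{D(y)} - E_{D(x)}) <grad l(z;t), x - y>.  The integrand is beta |x - y|-Lipschitz
   in z on the supports, so integrating against a near-optimal coupling bounds this difference
   by beta |x - y| W_1(D(x), D(y)) <= epsilon beta |x - y|^2. *)

theory Submission
  imports Defs
begin

lemma sets_mixture [simp, measurable_cong]: "sets (mixture \<alpha> M N) = sets M"
  unfolding mixture_def by (simp add: sets.sets_measure_of_eq)

lemma space_mixture [simp]: "space (mixture \<alpha> M N) = space M"
  using sets_mixture by (rule sets_eq_imp_space_eq)

lemma emeasure_mixture:
  assumes sets_N: "sets N = sets M" and A: "A \<in> sets M"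
  shows "emeasure (mixture \<alpha> M N) A = ennreal \<alpha> * emeasure M A + ennreal (1 - \<alpha>) * emeasure N A"
  unfolding mixture_def
proof (rule emeasure_measure_of_sigma[OF sets.sigma_algebra_axioms _ _ A])
  show "positive (sets M) (\<lambda>A. ennreal \<alpha> * emeasure M A + ennreal (1 - \<alpha>) * emeasure N A)"
    by (simp add: positive_def)
  show "countably_additive (sets M) (\<lambda>A. ennreal \<alpha> * emeasure M A + ennreal (1 - \<alpha>) * emeasure N A)"
  proof (rule countably_additiveI)
    fix F :: "nat \<Rightarrow> _"
    assume F: "range F \<subseteq> sets M" "disjoint_family F"
    then have "range F \<subseteq> sets N" using sets_N by simp
    with F show "(\<Sum>i. ennreal \<alpha> * emeasure M (F i) + ennreal (1 - \<alpha>) * emeasure N (F i))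
        = ennreal \<alpha> * emeasure M (\<Union>i. F i) + ennreal (1 - \<alpha>) * emeasure N (\<Union>i. F i)"
      by (simp add: suminf_add[symmetric] ennreal_suminf_cmult suminf_emeasure)
  qed
qed

lemma nn_integral_mixture:
  assumes sets_N: "sets N = sets M" and f: "f \<in> borel_measurable M"
  shows "(\<integral>\<^sup>+x. f x \<partial>mixture \<alpha> M N)
    = ennreal \<alpha> * (\<integral>\<^sup>+x. f x \<partial>M) + ennreal (1 - \<alpha>) * (\<integral>\<^sup>+x. f x \<partial>N)"
  using f
proof induction
  case (cong f g)
  then show ?case
    using sets_eq_imp_space_eq[OF sets_N] by (simp cong: nn_integral_cong_simp)
next
  case (set A)
  then show ?case using sets_N by (simp add: emeasure_mixture)
next
  case (mult u c)
  then show ?case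
    using sets_N by (simp add: nn_integral_cmult algebra_simps)
next
  case (add u v)
  then show ?case
    using sets_N by (simp add: nn_integral_add algebra_simps)
next
  case (seq U)
  have U_N: "U i \<in> borel_measurable N" for i
    using seq(1) sets_N by simp
  have mono_integrals: "incseq (\<lambda>i. integral\<^sup>N K (U i))" for K
    using \<open>incseq U\<close> by (auto simp: incseq_def le_fun_def intro!: nn_integral_mono)
  have "(\<integral>\<^sup>+x. (SUP i. U i) x \<partial>mixture \<alpha> M N) = (SUP i. integral\<^sup>N (mixture \<alpha> M N) (U i))"
    unfolding SUP_apply using seq by (simp add: nn_integral_monotone_convergence_SUP)
  also have "\<dots> = (SUP i. ennreal \<alpha> * integral\<^sup>N M (U i) + ennreal (1 - \<alpha>) * integral\<^sup>N N (U i))"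
    using seq.IH by simp
  also have "\<dots> = ennreal \<alpha> * (SUP i. integral\<^sup>N M (U i)) + ennreal (1 - \<alpha>) * (SUP i. integral\<^sup>N N (U i))"
    by (subst ennreal_SUP_add)
       (auto intro!: mult_left_mono mono_integrals[THEN incseqD] simp: incseq_def SUP_mult_left_ennreal)
  also have "\<dots> = ennreal \<alpha> * (\<integral>\<^sup>+x. (SUP i. U i) x \<partial>M) + ennreal (1 - \<alpha>) * (\<integral>\<^sup>+x. (SUP i. U i) x \<partial>N)"
    unfolding SUP_apply using seq U_N by (simp add: nn_integral_monotone_convergence_SUP)
  finally show ?case .
qed

lemma
  fixes f :: "_ \<Rightarrow> real"
  assumes sets_N: "sets N = sets M" and \<alpha>: "0 \<le> \<alpha>" "\<alpha> \<le> 1"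
    and f_M: "integrable M f" and f_N: "integrable N f"
  shows integrable_mixture: "integrable (mixture \<alpha> M N) f"
    and integral_mixture: "(\<integral>x. f x \<partial>mixture \<alpha> M N) = \<alpha> * (\<integral>x. f x \<partial>M) + (1 - \<alpha>) * (\<integral>x. f x \<partial>N)"
proof -
  have [measurable]: "f \<in> borel_measurable M" using f_M by auto
  have pos: "(\<integral>\<^sup>+x. ennreal (f x) \<partial>mixture \<alpha> M N)
      = ennreal \<alpha> * (\<integral>\<^sup>+x. ennreal (f x) \<partial>M) + ennreal (1 - \<alpha>) * (\<integral>\<^sup>+x. ennreal (f x) \<partial>N)"
    and neg: "(\<integral>\<^sup>+x. ennreal (- f x) \<partial>mixture \<alpha> M N)
      = ennreal \<alpha> * (\<integral>\<^sup>+x. ennreal (- f x) \<partial>M) + ennreal (1 - \<alpha>) * (\<integral>\<^sup>+x. ennreal (- f x) \<partial>N)"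
    using sets_N by (simp_all add: nn_integral_mixture)
  have finite: "(\<integral>\<^sup>+x. ennreal (f x) \<partial>M) \<noteq> \<top>" "(\<integral>\<^sup>+x. ennreal (- f x) \<partial>M) \<noteq> \<top>"
    "(\<integral>\<^sup>+x. ennreal (f x) \<partial>N) \<noteq> \<top>" "(\<integral>\<^sup>+x. ennreal (- f x) \<partial>N) \<noteq> \<top>"
    using f_M f_N by (auto simp: real_integrable_def)
  show int: "integrable (mixture \<alpha> M N) f"
    unfolding real_integrable_def using pos neg finite by (simp add: ennreal_mult_eq_top_iff)
  show "(\<integral>x. f x \<partial>mixture \<alpha> M N) = \<alpha> * (\<integral>x. f x \<partial>M) + (1 - \<alpha>) * (\<integral>x. f x \<partial>N)"
    unfolding real_lebesgue_integral_def[OF int] real_lebesgue_integral_def[OF f_M]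
      real_lebesgue_integral_def[OF f_N] pos neg
    using finite \<alpha>
    by (simp add: enn2real_plus enn2real_mult ennreal_mult_less_top top.not_eq_extremum algebra_simps)
qed

lemma closed_measure_support: "closed (measure_support M)"
proof -
  have "- measure_support M = \<Union>{U. open U \<and> emeasure M U = 0}"
    unfolding measure_support_def by (auto simp: not_less)
  then show ?thesis
    by (metis (no_types, lifting) closed_def open_Union mem_Collect_eq)
qed

lemma AE_in_measure_support:
  fixes M :: "'b::euclidean_space measure"
  assumes sets_M: "sets M = sets borel"
  shows "AE z in M. z \<in> measure_support M"
proof (rule AE_I')
  define F where "F = {U::'b set. open U \<and> emeasure M U = 0}"
  obtain F' where F': "F' \<subseteq> F" "countable F'" "\<Union>F' = \<Union>F"
    using Lindelof[of F] unfolding F_def by auto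
  have "(\<Union>U\<in>F'. U) \<in> null_sets M"
    using F' sets_M by (intro null_sets_UN') (auto simp: F_def null_sets_def)
  then show "\<Union>F \<in> null_sets M" using F' by simp
  show "{z \<in> space M. z \<notin> measure_support M} \<subseteq> \<Union>F"
    unfolding F_def measure_support_def by (auto simp: not_less)
qed

text \<open>The easy half of Kantorovich--Rubinstein duality.\<close>

lemma integral_diff_le_coupling_cost:
  fixes g :: "'b::euclidean_space \<Rightarrow> real"
  assumes \<pi>: "\<pi> \<in> couplings M N" and g_M: "integrable M g" and g_N: "integrable N g"
    and S: "S \<in> sets borel" and S_M: "AE x in M. x \<in> S" and S_N: "AE x in N. x \<in> S"
    and lipschitz: "\<And>x y. x \<in> S \<Longrightarrow> y \<in> S \<Longrightarrow> g y - g x \<le> c * dist x y"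
    and cost_finite: "(\<integral>\<^sup>+p. dist (fst p) (snd p) \<partial>\<pi>) < \<top>"
  shows "(\<integral>x. g x \<partial>N) - (\<integral>x. g x \<partial>M) \<le> c * enn2real (\<integral>\<^sup>+p. dist (fst p) (snd p) \<partial>\<pi>)"
proof -
  have sets_\<pi>: "sets \<pi> = sets (borel \<Otimes>\<^sub>M borel)"
    and M: "M = distr \<pi> borel fst" and N: "N = distr \<pi> borel snd"
    using \<pi> unfolding couplings_def by auto
  have [measurable]: "fst \<in> measurable \<pi> borel" "snd \<in> measurable \<pi> borel"
    using sets_\<pi> by (simp_all cong: measurable_cong_sets)
  have [measurable]: "g \<in> borel_measurable borel"
    using g_M M by auto
  have g_fst: "integrable \<pi> (\<lambda>p. g (fst p))" and g_snd: "integrable \<pi> (\<lambda>p. g (snd p))"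
    using g_M g_N M N by (simp_all add: integrable_distr_eq)
  have dist_integrable: "integrable \<pi> (\<lambda>p. dist (fst p) (snd p))"
    using cost_finite by (intro integrableI_bounded) auto
  have S_measurable: "{x \<in> space borel. x \<in> S} \<in> sets borel"
    using S by simp
  have "AE p in \<pi>. fst p \<in> S"
    using S_M unfolding M by (subst (asm) AE_distr_iff) (use S_measurable in auto)
  moreover have "AE p in \<pi>. snd p \<in> S"
    using S_N unfolding N by (subst (asm) AE_distr_iff) (use S_measurable in auto)
  ultimately
  have "(\<integral>p. g (snd p) - g (fst p) \<partial>\<pi>) \<le> (\<integral>p. c * dist (fst p) (snd p) \<partial>\<pi>)"
    using g_fst g_snd dist_integrable lipschitz by (intro integral_mono_AE) auto
  then show ?thesis
    using g_fst g_snd dist_integrable M N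
    by (simp add: integral_distr nn_integral_eq_integral)
qed

lemma integral_diff_le_wasserstein1:
  fixes g :: "'b::euclidean_space \<Rightarrow> real"
  assumes W: "wasserstein1 M N \<le> ennreal w" and "w \<ge> 0" and "c \<ge> 0"
    and "integrable M g" "integrable N g"
    and "S \<in> sets borel" "AE x in M. x \<in> S" "AE x in N. x \<in> S"
    and "\<And>x y. x \<in> S \<Longrightarrow> y \<in> S \<Longrightarrow> g y - g x \<le> c * dist x y"
  shows "(\<integral>x. g x \<partial>N) - (\<integral>x. g x \<partial>M) \<le> c * w"
proof (rule tendsto_lowerbound)
  show "((\<lambda>\<delta>. c * (w + \<delta>)) \<longlongrightarrow> c * w) (at_right 0)"
    by (auto intro!: tendsto_eq_intros)
  show "\<forall>\<^sub>F \<delta> in at_right 0. (\<integral>x. g x \<partial>N) - (\<integral>x. g x \<partial>M) \<le> c * (w + \<delta>)"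
  proof (rule eventually_at_rightI[of 0 1])
    fix \<delta> :: real
    assume "\<delta> \<in> {0<..<1}"
    then have "w + \<delta> \<ge> 0" using \<open>w \<ge> 0\<close> by simp
    have "wasserstein1 M N < ennreal (w + \<delta>)"
      using W \<open>w \<ge> 0\<close> \<open>\<delta> \<in> {0<..<1}\<close> by (simp add: le_less_trans ennreal_lessI)
    then obtain \<pi> where \<pi>: "\<pi> \<in> couplings M N"
      and cost: "(\<integral>\<^sup>+p. dist (fst p) (snd p) \<partial>\<pi>) < ennreal (w + \<delta>)"
      unfolding wasserstein1_def by (auto simp: INF_less_iff)
    then have "(\<integral>x. g x \<partial>N) - (\<integral>x. g x \<partial>M) \<le> c * enn2real (\<integral>\<^sup>+p. dist (fst p) (snd p) \<partial>\<pi>)"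
      using assms order.strict_trans[OF cost ennreal_less_top] by (intro integral_diff_le_coupling_cost) auto
    also have "\<dots> \<le> c * (w + \<delta>)"
      using cost \<open>c \<ge> 0\<close> \<open>w + \<delta> \<ge> 0\<close> by (intro mult_left_mono enn2real_leI) auto
    finally show "(\<integral>x. g x \<partial>N) - (\<integral>x. g x \<partial>M) \<le> c * (w + \<delta>)" .
  qed simp
qed simp

lemma norm_convex_combination_power2:
  fixes x y :: "'a::real_inner"
  shows "norm (a *\<^sub>R x + (1 - a) *\<^sub>R y) ^ 2
    = a * norm x ^ 2 + (1 - a) * norm y ^ 2 - a * (1 - a) * norm (x - y) ^ 2"
  unfolding power2_norm_eq_inner
  by (simp add: inner_add_left inner_add_right inner_diff_left inner_diff_right inner_commute algebra_simps)

lemma lambda_convex_onI: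
  fixes f :: "'a::real_inner \<Rightarrow> real"
  assumes "convex S"
    and convex_combination_le: "\<And>x y a. x \<in> S \<Longrightarrow> y \<in> S \<Longrightarrow> 0 < a \<Longrightarrow> a < 1 \<Longrightarrow>
      f (a *\<^sub>R x + (1 - a) *\<^sub>R y) \<le> a * f x + (1 - a) * f y - a * (1 - a) * lam / 2 * norm (x - y) ^ 2"
  shows "lambda_convex_on lam S f"
  unfolding lambda_convex_on_def
proof (rule convex_onI[OF _ \<open>convex S\<close>])
  fix t :: real and x y
  assume "0 < t" "t < 1" "x \<in> S" "y \<in> S"
  then have "f ((1 - t) *\<^sub>R x + t *\<^sub>R y) \<le> (1 - t) * f x + t * f y - (1 - t) * t * lam / 2 * norm (x - y) ^ 2"
    using convex_combination_le[of x y "1 - t"] by simp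
  moreover have "norm ((1 - t) *\<^sub>R x + t *\<^sub>R y) ^ 2
      = (1 - t) * norm x ^ 2 + t * norm y ^ 2 - (1 - t) * t * norm (x - y) ^ 2"
    using norm_convex_combination_power2[of "1 - t" x y] by simp
  ultimately show "f ((1 - t) *\<^sub>R x + t *\<^sub>R y) - lam / 2 * norm ((1 - t) *\<^sub>R x + t *\<^sub>R y) ^ 2
      \<le> (1 - t) * (f x - lam / 2 * norm x ^ 2) + t * (f y - lam / 2 * norm y ^ 2)"
    by (simp only:) (simp add: field_simps)
qed

locale performative_risk =
  fixes \<Theta> :: "'a::euclidean_space set"
    and D :: "'a \<Rightarrow> 'b::euclidean_space measure"
    and l :: "'b \<Rightarrow> 'a \<Rightarrow> real"
    and grad :: "'b \<Rightarrow> 'a \<Rightarrow> 'a"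
    and \<epsilon> \<beta> \<gamma> :: real
  assumes convex: "convex \<Theta>"
    and distr: "\<And>\<theta>. \<theta> \<in> \<Theta> \<Longrightarrow> prob_space (D \<theta>) \<and> sets (D \<theta>) = sets borel"
    and int_l: "\<And>\<theta> \<theta>0. \<theta> \<in> \<Theta> \<Longrightarrow> \<theta>0 \<in> \<Theta> \<Longrightarrow> integrable (D \<theta>0) (\<lambda>z. l z \<theta>)"
    and int_grad: "\<And>\<theta> \<theta>0. \<theta> \<in> \<Theta> \<Longrightarrow> \<theta>0 \<in> \<Theta> \<Longrightarrow> integrable (D \<theta>0) (\<lambda>z. grad z \<theta>)"
    and eps_nonneg: "\<epsilon> \<ge> 0" and beta_nonneg: "\<beta> \<ge> 0"
    and sensitive: "\<And>\<theta> \<theta>'. \<theta> \<in> \<Theta> \<Longrightarrow> \<theta>' \<in> \<Theta> \<Longrightarrow>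
        wasserstein1 (D \<theta>) (D \<theta>') \<le> ennreal (\<epsilon> * norm (\<theta> - \<theta>'))"
    and smooth: "\<And>\<theta> z z'. \<theta> \<in> \<Theta> \<Longrightarrow>
        z \<in> (\<Union>\<theta>'\<in>\<Theta>. measure_support (D \<theta>')) \<Longrightarrow> z' \<in> (\<Union>\<theta>'\<in>\<Theta>. measure_support (D \<theta>')) \<Longrightarrow>
        norm (grad z \<theta> - grad z' \<theta>) \<le> \<beta> * norm (z - z')"
    and strongly_convex: "\<And>\<theta> \<theta>' \<theta>0. \<theta> \<in> \<Theta> \<Longrightarrow> \<theta>' \<in> \<Theta> \<Longrightarrow> \<theta>0 \<in> \<Theta> \<Longrightarrow>
        (\<integral>z. l z \<theta> \<partial>(D \<theta>0)) \<ge> (\<integral>z. l z \<theta>' \<partial>(D \<theta>0))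
          + (\<integral>z. grad z \<theta>' \<bullet> (\<theta> - \<theta>') \<partial>(D \<theta>0)) + \<gamma> / 2 * norm (\<theta> - \<theta>') ^ 2"
    and mixture_dominance: "\<And>\<theta> \<theta>' \<theta>0 \<alpha>. \<theta> \<in> \<Theta> \<Longrightarrow> \<theta>' \<in> \<Theta> \<Longrightarrow> \<theta>0 \<in> \<Theta> \<Longrightarrow>
        0 < \<alpha> \<Longrightarrow> \<alpha> < 1 \<Longrightarrow>
        (\<integral>z. l z \<theta>0 \<partial>(D (\<alpha> *\<^sub>R \<theta> + (1 - \<alpha>) *\<^sub>R \<theta>')))
          \<le> (\<integral>z. l z \<theta>0 \<partial>(mixture \<alpha> (D \<theta>) (D \<theta>')))"
begin

lemma perf_risk_le_mixture:
  assumes x: "x \<in> \<Theta>" and y: "y \<in> \<Theta>" and "0 < a" "a < 1"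
  defines "t \<equiv> a *\<^sub>R x + (1 - a) *\<^sub>R y"
  shows "perf_risk D l t \<le> a * (\<integral>z. l z t \<partial>D x) + (1 - a) * (\<integral>z. l z t \<partial>D y)"
proof -
  have t: "t \<in> \<Theta>"
    unfolding t_def using convex x y \<open>0 < a\<close> \<open>a < 1\<close> by (intro convexD) auto
  have "perf_risk D l t \<le> (\<integral>z. l z t \<partial>mixture a (D x) (D y))"
    unfolding perf_risk_def t_def using mixture_dominance[OF x y t \<open>0 < a\<close> \<open>a < 1\<close>] by (simp add: t_def)
  also have "\<dots> = a * (\<integral>z. l z t \<partial>D x) + (1 - a) * (\<integral>z. l z t \<partial>D y)"
    using distr[OF x] distr[OF y] int_l[OF t x] int_l[OF t y] \<open>0 < a\<close> \<open>a < 1\<close>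
    by (intro integral_mixture) auto
  finally show ?thesis .
qed

lemma integral_grad_inner_diff_le:
  assumes x: "x \<in> \<Theta>" and y: "y \<in> \<Theta>" and t: "t \<in> \<Theta>"
  shows "(\<integral>z. grad z t \<bullet> (x - y) \<partial>D y) - (\<integral>z. grad z t \<bullet> (x - y) \<partial>D x)
    \<le> \<epsilon> * \<beta> * norm (x - y) ^ 2"
proof -
  define S where "S = measure_support (D x) \<union> measure_support (D y)"
  have lipschitz: "grad z' t \<bullet> (x - y) - grad z t \<bullet> (x - y) \<le> (\<beta> * norm (x - y)) * dist z z'"
    if "z \<in> S" "z' \<in> S" for z z'
  proof -
    have "grad z' t \<bullet> (x - y) - grad z t \<bullet> (x - y) \<le> norm (grad z' t - grad z t) * norm (x - y)"
      by (metis inner_diff_left norm_cauchy_schwarz)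
    also have "\<dots> \<le> \<beta> * norm (z' - z) * norm (x - y)"
      using that x y unfolding S_def by (intro mult_right_mono smooth[OF t]) auto
    finally show ?thesis by (simp add: dist_norm norm_minus_commute algebra_simps)
  qed
  have "(\<integral>z. grad z t \<bullet> (x - y) \<partial>D y) - (\<integral>z. grad z t \<bullet> (x - y) \<partial>D x)
      \<le> (\<beta> * norm (x - y)) * (\<epsilon> * norm (x - y))"
  proof (rule integral_diff_le_wasserstein1[OF sensitive[OF x y]])
    show "S \<in> sets borel"
      unfolding S_def by (intro sets.Un borel_closed closed_measure_support)
    show "AE z in D x. z \<in> S" "AE z in D y. z \<in> S"
      unfolding S_def using AE_in_measure_support[of "D x"] AE_in_measure_support[of "D y"] distr[OF x] distr[OF y]
      by (auto elim: eventually_mono)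
    show "integrable (D x) (\<lambda>z. grad z t \<bullet> (x - y))" "integrable (D y) (\<lambda>z. grad z t \<bullet> (x - y))"
      using int_grad[OF t x] int_grad[OF t y] by auto
  qed (use lipschitz eps_nonneg beta_nonneg in auto)
  then show ?thesis
    by (simp add: power2_eq_square algebra_simps)
qed

lemma perf_risk_convex_combination_le:
  assumes x: "x \<in> \<Theta>" and y: "y \<in> \<Theta>" and a: "0 < a" "a < 1"
  shows "perf_risk D l (a *\<^sub>R x + (1 - a) *\<^sub>R y) \<le> a * perf_risk D l x + (1 - a) * perf_risk D l y
      - a * (1 - a) * (\<gamma> - 2 * \<epsilon> * \<beta>) / 2 * norm (x - y) ^ 2"
proof -
  define t where "t = a *\<^sub>R x + (1 - a) *\<^sub>R y"
  have t: "t \<in> \<Theta>"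
    unfolding t_def using convex x y a by (intro convexD) auto
  define d where "d = norm (x - y)"
  define G\<^sub>x G\<^sub>y where "G\<^sub>x = (\<integral>z. grad z t \<bullet> (x - y) \<partial>D x)" and "G\<^sub>y = (\<integral>z. grad z t \<bullet> (x - y) \<partial>D y)"
  have "x - t = (1 - a) *\<^sub>R (x - y)" and "y - t = - a *\<^sub>R (x - y)"
    unfolding t_def by (simp_all add: algebra_simps)
  then have at_x: "perf_risk D l x \<ge> (\<integral>z. l z t \<partial>D x) + (1 - a) * G\<^sub>x + \<gamma> / 2 * (1 - a) ^ 2 * d ^ 2"
    and at_y: "perf_risk D l y \<ge> (\<integral>z. l z t \<partial>D y) - a * G\<^sub>y + \<gamma> / 2 * a ^ 2 * d ^ 2"
    using strongly_convex[OF x t x] strongly_convex[OF y t y] a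
    by (simp_all add: perf_risk_def G\<^sub>x_def G\<^sub>y_def d_def power_mult_distrib)
  have "perf_risk D l t \<le> a * (\<integral>z. l z t \<partial>D x) + (1 - a) * (\<integral>z. l z t \<partial>D y)"
    using perf_risk_le_mixture[OF x y a] unfolding t_def .
  also have "\<dots> \<le> a * (perf_risk D l x - (1 - a) * G\<^sub>x - \<gamma> / 2 * (1 - a) ^ 2 * d ^ 2)
      + (1 - a) * (perf_risk D l y + a * G\<^sub>y - \<gamma> / 2 * a ^ 2 * d ^ 2)"
    using at_x at_y a by (intro add_mono mult_left_mono) auto
  also have "\<dots> = a * perf_risk D l x + (1 - a) * perf_risk D l y
      + a * (1 - a) * (G\<^sub>y - G\<^sub>x) - a * (1 - a) * \<gamma> / 2 * d ^ 2"
    by (simp add: field_simps power2_eq_square)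
  also have "\<dots> \<le> a * perf_risk D l x + (1 - a) * perf_risk D l y
      + a * (1 - a) * (\<epsilon> * \<beta> * d ^ 2) - a * (1 - a) * \<gamma> / 2 * d ^ 2"
    using integral_grad_inner_diff_le[OF x y t] a unfolding G\<^sub>x_def G\<^sub>y_def d_def
    by (intro add_mono diff_mono mult_left_mono order.refl) auto
  also have "\<dots> = a * perf_risk D l x + (1 - a) * perf_risk D l y
      - a * (1 - a) * (\<gamma> - 2 * \<epsilon> * \<beta>) / 2 * d ^ 2"
    by (simp add: field_simps)
  finally show ?thesis unfolding t_def d_def .
qed

lemma lambda_convex_perf_risk: "lambda_convex_on (\<gamma> - 2 * \<epsilon> * \<beta>) \<Theta> (perf_risk D l)"
  using convex perf_risk_convex_combination_le by (rule lambda_convex_onI)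

end

theorem theorem3p1:
  fixes \<Theta> :: "'a::euclidean_space set"
    and D :: "'a \<Rightarrow> 'b::euclidean_space measure"
    and l :: "'b \<Rightarrow> 'a \<Rightarrow> real"
    and grad :: "'b \<Rightarrow> 'a \<Rightarrow> 'a"
    and \<epsilon> \<beta> \<gamma> :: real
  assumes closed: "closed \<Theta>" and convex: "convex \<Theta>"
    and distr: "\<And>\<theta>. \<theta> \<in> \<Theta> \<Longrightarrow> prob_space (D \<theta>) \<and> sets (D \<theta>) = sets borel"
    and grad: "\<And>z \<theta>. \<theta> \<in> \<Theta> \<Longrightarrow>
        ((\<lambda>t. l z t) has_derivative (\<lambda>h. grad z \<theta> \<bullet> h)) (at \<theta> within \<Theta>)"
    and int_l: "\<And>\<theta> \<theta>0. \<theta> \<in> \<Theta> \<Longrightarrow> \<theta>0 \<in> \<Theta> \<Longrightarrow> integrable (D \<theta>0) (\<lambda>z. l z \<theta>)"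
    and int_grad: "\<And>\<theta> \<theta>0. \<theta> \<in> \<Theta> \<Longrightarrow> \<theta>0 \<in> \<Theta> \<Longrightarrow> integrable (D \<theta>0) (\<lambda>z. grad z \<theta>)"
    and eps_nonneg: "\<epsilon> \<ge> 0" and beta_nonneg: "\<beta> \<ge> 0"
    and sensitive: "\<And>\<theta> \<theta>'. \<theta> \<in> \<Theta> \<Longrightarrow> \<theta>' \<in> \<Theta> \<Longrightarrow>
        wasserstein1 (D \<theta>) (D \<theta>') \<le> ennreal (\<epsilon> * norm (\<theta> - \<theta>'))"
    and smooth: "\<And>\<theta> z z'. \<theta> \<in> \<Theta> \<Longrightarrow>
        z \<in> (\<Union>\<theta>'\<in>\<Theta>. measure_support (D \<theta>')) \<Longrightarrow> z' \<in> (\<Union>\<theta>'\<in>\<Theta>. measure_support (D \<theta>')) \<Longrightarrow>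
        norm (grad z \<theta> - grad z' \<theta>) \<le> \<beta> * norm (z - z')"
    and strongly_convex: "\<And>\<theta> \<theta>' \<theta>0. \<theta> \<in> \<Theta> \<Longrightarrow> \<theta>' \<in> \<Theta> \<Longrightarrow> \<theta>0 \<in> \<Theta> \<Longrightarrow>
        (\<integral>z. l z \<theta> \<partial>(D \<theta>0)) \<ge> (\<integral>z. l z \<theta>' \<partial>(D \<theta>0))
          + (\<integral>z. grad z \<theta>' \<bullet> (\<theta> - \<theta>') \<partial>(D \<theta>0)) + \<gamma> / 2 * norm (\<theta> - \<theta>') ^ 2"
    and mixture_dominance: "\<And>\<theta> \<theta>' \<theta>0 \<alpha>. \<theta> \<in> \<Theta> \<Longrightarrow> \<theta>' \<in> \<Theta> \<Longrightarrow> \<theta>0 \<in> \<Theta> \<Longrightarrow>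
        0 < \<alpha> \<Longrightarrow> \<alpha> < 1 \<Longrightarrow>
        (\<integral>z. l z \<theta>0 \<partial>(D (\<alpha> *\<^sub>R \<theta> + (1 - \<alpha>) *\<^sub>R \<theta>')))
          \<le> (\<integral>z. l z \<theta>0 \<partial>(mixture \<alpha> (D \<theta>) (D \<theta>')))"
  shows "lambda_convex_on (\<gamma> - 2 * \<epsilon> * \<beta>) \<Theta> (perf_risk D l)"
proof -
  \<comment> \<open>grad enters only through the first-order inequality strongly_convex.\<close>
  interpret performative_risk \<Theta> D l grad \<epsilon> \<beta> \<gamma>
    by unfold_locales (fact assms)+
  show ?thesis
    by (rule lambda_convex_perf_risk)
qed

end
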